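(* Let $M$ be a duplicial module in a pre-additive category, $n\ge1$, $1\le k\le n$, and $0\le i_k<i_{k-1}<\cdots<i_1<n$. Then, as morphisms $M_{n-k}\to M_n$, $$\kappa_n\, s_{n-1,i_1}s_{n-2,i_2}\cdots s_{n-k,i_k}=\begin{cases}0,& i_k=0,\\ (-1)^k\, s_{n-1,i_1-1}s_{n-2,i_2-1}\cdots s_{n-k,i_k-1}\,\kappa_{n-k},& i_k\ge1.\end{cases}$$
   Context: Let $\mathcal A$ be a pre-additive category. Let $\Lambda_+$ be the category with objects $[n]$, $n\ge0$, where $\Lambda_+([m],[n])$ is the set of weakly monotone $f:\mathbb Z\to\mathbb Z$ with $f(j+m+1)=f(j)+n+1$ for all $j$ and $f(0)\ge0$. Define $\varepsilon^n_i:[n-1]\to[n]$ ($n\ge1$, $0\le i\le n$) by $\varepsilon^n_i(j)=j$ for $0\le j<i$, $j+1$ for $i\le j\le n-1$, and $\eta^n_i:[n+1]\to[n]$ ($0\le i\le n+1$) by $\eta^n_i(j)=j$ for $0\le j\le i$, $j-1$ for $i<j\le n+1$. A duplicial module is a functor $M:\Lambda_+^{op}\to\mathcal A$; $M_n=M([n])$, $\partial_{n,i}=M(\varepsilon^n_i):M_n\to M_{n-1}$, $s_{n,i}=M(\eta^n_i):M_n\to M_{n+1}$. Convention $M_{-1}=0$, maps into/out of it zero. The Karoubi operator is $\kappa_n=(-1)^n(\partial_{n+1,0}s_{n,n+1}-s_{n-1,n}\partial_{n,0}):M_n\to M_n$ (so $\kappa_0=\partial_{1,0}s_{0,1}$).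 *)

theory Defs
  imports Main
begin

text \<open>Hom C a b is the set of morphisms a -> b; Comp C g f is "g after f".
  Each hom-set is an abelian group (Add, Zero, Neg) and composition is bilinear.\<close>

record ('o, 'm) precat =
  Ob   :: "'o set"
  Hom  :: "'o \<Rightarrow> 'o \<Rightarrow> 'm set"
  Comp :: "'m \<Rightarrow> 'm \<Rightarrow> 'm"
  Id   :: "'o \<Rightarrow> 'm"
  Add  :: "'m \<Rightarrow> 'm \<Rightarrow> 'm"
  Zero :: "'o \<Rightarrow> 'o \<Rightarrow> 'm"
  Neg  :: "'m \<Rightarrow> 'm"

definition preadditive :: "('o, 'm, 'x) precat_scheme \<Rightarrow> bool" where
  "preadditive C \<longleftrightarrow>
     (\<forall>a\<in>Ob C. Id C a \<in> Hom C a a)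
   \<and> (\<forall>a\<in>Ob C. \<forall>b\<in>Ob C. \<forall>c\<in>Ob C. \<forall>f\<in>Hom C a b. \<forall>g\<in>Hom C b c. Comp C g f \<in> Hom C a c)
   \<and> (\<forall>a\<in>Ob C. \<forall>b\<in>Ob C. \<forall>c\<in>Ob C. \<forall>d\<in>Ob C. \<forall>f\<in>Hom C a b. \<forall>g\<in>Hom C b c. \<forall>h\<in>Hom C c d.
        Comp C h (Comp C g f) = Comp C (Comp C h g) f)
   \<and> (\<forall>a\<in>Ob C. \<forall>b\<in>Ob C. \<forall>f\<in>Hom C a b. Comp C f (Id C a) = f \<and> Comp C (Id C b) f = f)
   \<and> (\<forall>a\<in>Ob C. \<forall>b\<in>Ob C.
        Zero C a b \<in> Hom C a b
      \<and> (\<forall>f\<in>Hom C a b. \<forall>g\<in>Hom C a b. Add C f g \<in> Hom C a b)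
      \<and> (\<forall>f\<in>Hom C a b. Neg C f \<in> Hom C a b)
      \<and> (\<forall>f\<in>Hom C a b. \<forall>g\<in>Hom C a b. \<forall>h\<in>Hom C a b. Add C (Add C f g) h = Add C f (Add C g h))
      \<and> (\<forall>f\<in>Hom C a b. \<forall>g\<in>Hom C a b. Add C f g = Add C g f)
      \<and> (\<forall>f\<in>Hom C a b. Add C f (Zero C a b) = f)
      \<and> (\<forall>f\<in>Hom C a b. Add C f (Neg C f) = Zero C a b))
   \<and> (\<forall>a\<in>Ob C. \<forall>b\<in>Ob C. \<forall>c\<in>Ob C. \<forall>f\<in>Hom C a b. \<forall>f'\<in>Hom C a b. \<forall>g\<in>Hom C b c.
        Comp C g (Add C f f') = Add C (Comp C g f) (Comp C g f'))
   \<and> (\<forall>a\<in>Ob C. \<forall>b\<in>Ob C. \<forall>c\<in>Ob C. \<forall>f\<in>Hom C a b. \<forall>g\<in>Hom C b c. \<forall>g'\<in>Hom C b c.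
        Comp C (Add C g g') f = Add C (Comp C g f) (Comp C g' f))"

text \<open>Morphisms [m] -> [n] of Lambda_+ (composition = function composition).\<close>
definition lam_hom :: "nat \<Rightarrow> nat \<Rightarrow> (int \<Rightarrow> int) \<Rightarrow> bool" where
  "lam_hom m n f \<longleftrightarrow> mono f \<and> (\<forall>j. f (j + int m + 1) = f j + int n + 1) \<and> f 0 \<ge> 0"

text \<open>Extension of a map given on 0..m to the unique map with f(j+m+1) = f(j)+n+1.\<close>
definition lam_ext :: "nat \<Rightarrow> nat \<Rightarrow> (int \<Rightarrow> int) \<Rightarrow> int \<Rightarrow> int" where
  "lam_ext m n g j = g (j mod (int m + 1)) + (j div (int m + 1)) * (int n + 1)"

definition eps :: "nat \<Rightarrow> nat \<Rightarrow> int \<Rightarrow> int" where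
  "eps n i = lam_ext (n - 1) n (\<lambda>j. if j < int i then j else j + 1)"

definition eta :: "nat \<Rightarrow> nat \<Rightarrow> int \<Rightarrow> int" where
  "eta n i = lam_ext (n + 1) n (\<lambda>j. if j \<le> int i then j else j - 1)"

text \<open>A duplicial module: a functor Lambda_+^op -> C, given by an object map Mo and
  a morphism map Mf m n f : M_n -> M_m for f : [m] -> [n].\<close>
definition duplicial :: "('o, 'm, 'x) precat_scheme \<Rightarrow> (nat \<Rightarrow> 'o)
    \<Rightarrow> (nat \<Rightarrow> nat \<Rightarrow> (int \<Rightarrow> int) \<Rightarrow> 'm) \<Rightarrow> bool" where
  "duplicial C Mo Mf \<longleftrightarrow>
     (\<forall>n. Mo n \<in> Ob C)
   \<and> (\<forall>m n f. lam_hom m n f \<longrightarrow> Mf m n f \<in> Hom C (Mo n) (Mo m))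
   \<and> (\<forall>m. Mf m m id = Id C (Mo m))
   \<and> (\<forall>l m n f g. lam_hom l m f \<longrightarrow> lam_hom m n g \<longrightarrow>
        Mf l n (g \<circ> f) = Comp C (Mf l m f) (Mf m n g))"

definition dface :: "(nat \<Rightarrow> nat \<Rightarrow> (int \<Rightarrow> int) \<Rightarrow> 'm) \<Rightarrow> nat \<Rightarrow> nat \<Rightarrow> 'm" where
  "dface Mf n i = Mf (n - 1) n (eps n i)"

definition sdeg :: "(nat \<Rightarrow> nat \<Rightarrow> (int \<Rightarrow> int) \<Rightarrow> 'm) \<Rightarrow> nat \<Rightarrow> nat \<Rightarrow> 'm" where
  "sdeg Mf n i = Mf (n + 1) n (eta n i)"

text \<open>Karoubi operator; for n = 0 the term through M_{-1} = 0 vanishes.\<close>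
definition karoubi :: "('o, 'm, 'x) precat_scheme \<Rightarrow> (nat \<Rightarrow> nat \<Rightarrow> (int \<Rightarrow> int) \<Rightarrow> 'm)
    \<Rightarrow> nat \<Rightarrow> 'm" where
  "karoubi C Mf n =
     (if n = 0 then Comp C (dface Mf 1 0) (sdeg Mf 0 1)
      else (let t = Add C (Comp C (dface Mf (n + 1) 0) (sdeg Mf n (n + 1)))
                          (Neg C (Comp C (sdeg Mf (n - 1) n) (dface Mf n 0)))
            in if even n then t else Neg C t))"

definition sgnmor :: "('o, 'm, 'x) precat_scheme \<Rightarrow> nat \<Rightarrow> 'm \<Rightarrow> 'm" where
  "sgnmor C k f = (if even k then f else Neg C f)"

text \<open>sseq C Mo Mf i n k = s_{n-1,i 1} s_{n-2,i 2} ... s_{n-k,i k} : M_{n-k} -> M_n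
  (for k = 0 the identity of M_n).\<close>
fun sseq :: "('o, 'm, 'x) precat_scheme \<Rightarrow> (nat \<Rightarrow> 'o) \<Rightarrow> (nat \<Rightarrow> nat \<Rightarrow> (int \<Rightarrow> int) \<Rightarrow> 'm)
    \<Rightarrow> (nat \<Rightarrow> nat) \<Rightarrow> nat \<Rightarrow> nat \<Rightarrow> 'm" where
  "sseq C Mo Mf i n 0 = Id C (Mo n)"
| "sseq C Mo Mf i n (Suc k) = Comp C (sseq C Mo Mf i n k) (sdeg Mf (n - Suc k) (i (Suc k)))"

end

theory Submission
  imports Defs
begin

text \<open>
  Let t_n = \<partial>_{n+1,0} s_{n,n+1}; it is M of the translation j \<mapsto> j + 1 of \<Lambda>_+, and
  \<kappa>_n = (-1)^n (t_n - s_{n-1,n} \<partial>_{n,0}) for n \<ge> 1. Identities in \<Lambda>_+, checked on one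
  period, give t_{p+1} s_{p,0} = s_{p,p+1} and \<partial>_{p+1,0} s_{p,0} = 1, whence
  \<kappa>_{p+1} s_{p,0} = 0; for 1 \<le> i \<le> p they move t and \<partial>_0 past s_{p,i} at the cost of
  lowering i by one, whence \<kappa>_{p+1} s_{p,i} = - s_{p,i-1} \<kappa>_p. Pushing \<kappa> through the
  k degeneracies one at a time produces the sign (-1)^k, or 0 once the index 0 is met.
  As the indices strictly decrease, 0 can only occur last, and i_j \<le> n - j.
\<close>

section \<open>The category \<Lambda>_+\<close>

lemma lam_ext_eq:
  assumes "0 \<le> r" "r \<le> int m"
  shows "lam_ext m n g (r + q * (int m + 1)) = g r + q * (int n + 1)"
  using assms by (simp add: lam_ext_def)

lemma lam_ext_eq_base: "0 \<le> j \<Longrightarrow> j \<le> int m \<Longrightarrow> lam_ext m n g j = g j"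
  using lam_ext_eq[of j m n g 0] by simp

lemma lam_ext_eq_next:
  "int m < j \<Longrightarrow> j \<le> 2 * int m + 1 \<Longrightarrow> lam_ext m n g j = g (j - int m - 1) + int n + 1"
  using lam_ext_eq[of "j - int m - 1" m n g 1] by simp

lemma mono_int_stepI:
  fixes f :: "int \<Rightarrow> 'a::order"
  assumes "\<And>j. f j \<le> f (j + 1)"
  shows "mono f"
proof
  fix x y :: int
  assume "x \<le> y"
  then show "f x \<le> f y"
    by (induction y rule: int_ge_induct) (auto intro: order_trans assms)
qed

lemma lam_hom_lam_ext:
  assumes step: "\<And>j. 0 \<le> j \<Longrightarrow> j < int m \<Longrightarrow> g j \<le> g (j + 1)"
    and wrap: "g (int m) \<le> g 0 + int n + 1"
    and nonneg: "0 \<le> g 0"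
  shows "lam_hom m n (lam_ext m n g)"
proof -
  have "lam_ext m n g j \<le> lam_ext m n g (j + 1)" for j
  proof -
    define r q where "r = j mod (int m + 1)" and "q = j div (int m + 1)"
    have r: "0 \<le> r" "r \<le> int m" and j: "j = r + q * (int m + 1)"
      using pos_mod_bound[of "int m + 1" j] by (simp_all add: r_def q_def mod_div_mult_eq)
    show ?thesis
    proof (cases "r < int m")
      case True
      then show ?thesis
        using j r step[of r] lam_ext_eq[of r m n g q] lam_ext_eq[of "r + 1" m n g q]
        by (simp add: algebra_simps)
    next
      case False
      then have "r = int m" "j + 1 = 0 + (q + 1) * (int m + 1)"
        using r j by (simp_all add: algebra_simps)
      then show ?thesis
        using j r wrap lam_ext_eq[of r m n g q] lam_ext_eq[of 0 m n g "q + 1"]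
        by (simp add: algebra_simps)
    qed
  qed
  moreover have "lam_ext m n g (j + int m + 1) = lam_ext m n g j + int n + 1" for j
  proof -
    have "(j + (int m + 1)) div (int m + 1) = j div (int m + 1) + 1"
      by (rule div_add_self2) simp
    then show ?thesis by (simp add: lam_ext_def add.assoc distrib_right)
  qed
  ultimately show ?thesis
    using nonneg lam_ext_eq_base[of 0 m n g] unfolding lam_hom_def by (simp add: mono_int_stepI)
qed

lemma lam_hom_periodic:
  assumes "lam_hom m n f"
  shows "f (j + q * (int m + 1)) = f j + q * (int n + 1)"
proof -
  have step: "f (x + (int m + 1)) = f x + (int n + 1)" for x
    using assms by (simp add: lam_hom_def add.assoc)
  show ?thesis
  proof (induction q rule: int_induct[where k = 0])
    case (step1 q)
    then show ?case using step[of "j + q * (int m + 1)"] by (simp add: algebra_simps)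
  next
    case (step2 q)
    then show ?case using step[of "j + (q - 1) * (int m + 1)"] by (simp add: algebra_simps)
  qed simp
qed

lemma lam_ext_of_lam_hom:
  assumes "lam_hom m n f"
  shows "lam_ext m n f = f"
proof
  fix j
  show "lam_ext m n f j = f j"
    using lam_hom_periodic[OF assms, of "j mod (int m + 1)" "j div (int m + 1)"]
    by (simp add: lam_ext_def mod_div_mult_eq)
qed

lemma lam_hom_eqI:
  assumes "lam_hom m n f" "lam_hom m n g"
    and "\<And>j. 0 \<le> j \<Longrightarrow> j \<le> int m \<Longrightarrow> f j = g j"
  shows "f = g"
proof -
  have "lam_ext m n f = lam_ext m n g"
  proof
    fix j
    show "lam_ext m n f j = lam_ext m n g j"
      using assms(3)[of "j mod (int m + 1)"] pos_mod_bound[of "int m + 1" j]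
      by (simp add: lam_ext_def)
  qed
  then show ?thesis using assms(1,2) by (simp add: lam_ext_of_lam_hom)
qed

lemma lam_hom_comp: "lam_hom l m f \<Longrightarrow> lam_hom m n g \<Longrightarrow> lam_hom l n (g \<circ> f)"
  unfolding lam_hom_def mono_def by (metis comp_apply order_trans)

lemma lam_hom_id: "lam_hom n n id"
  by (simp add: lam_hom_def mono_def)

lemma lam_hom_shift: "lam_hom n n (\<lambda>j. j + 1)"
  by (simp add: lam_hom_def mono_def)

lemma lam_hom_eps: "i \<le> Suc n \<Longrightarrow> lam_hom n (Suc n) (eps (Suc n) i)"
  using lam_hom_lam_ext[of n "\<lambda>j. if j < int i then j else j + 1" "Suc n"]
  by (simp add: eps_def)

lemma lam_hom_eta: "i \<le> Suc n \<Longrightarrow> lam_hom (Suc n) n (eta n i)"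
  using lam_hom_lam_ext[of "Suc n" "\<lambda>j. if j \<le> int i then j else j - 1" n]
  by (simp add: eta_def)

lemma eps_eq_base: "0 \<le> j \<Longrightarrow> j \<le> int n \<Longrightarrow> eps (Suc n) i j = (if j < int i then j else j + 1)"
  by (simp add: eps_def lam_ext_eq_base)

lemma eta_eq_base: "0 \<le> j \<Longrightarrow> j \<le> int n + 1 \<Longrightarrow> eta n i j = (if j \<le> int i then j else j - 1)"
  by (simp add: eta_def lam_ext_eq_base)

lemma eta_eq_next:
  "int n + 1 < j \<Longrightarrow> j \<le> 2 * int n + 3 \<Longrightarrow>
    eta n i j = (if j - int n - 2 \<le> int i then j - int n - 2 else j - int n - 3) + int n + 1"
  by (simp add: eta_def lam_ext_eq_next)

lemmas eps_eta_eval = eps_eq_base eta_eq_base eta_eq_next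

lemma eta_0_comp_eps_0: "eta n 0 \<circ> eps (Suc n) 0 = id"
proof (rule lam_hom_eqI)
  show "lam_hom n n (eta n 0 \<circ> eps (Suc n) 0)"
    by (rule lam_hom_comp[where m = "Suc n"]) (simp_all add: lam_hom_eps lam_hom_eta)
  show "lam_hom n n id" by (rule lam_hom_id)
qed (simp add: eps_eta_eval)

lemma eta_last_comp_eps_0: "eta n (Suc n) \<circ> eps (Suc n) 0 = (\<lambda>j. j + 1)"
proof (rule lam_hom_eqI)
  show "lam_hom n n (eta n (Suc n) \<circ> eps (Suc n) 0)"
    by (rule lam_hom_comp[where m = "Suc n"]) (simp_all add: lam_hom_eps lam_hom_eta)
  show "lam_hom n n (\<lambda>j. j + 1)" by (rule lam_hom_shift)
qed (simp add: eps_eta_eval)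

lemma eta_0_comp_shift: "eta n 0 \<circ> (\<lambda>j. j + 1) = eta n (Suc n)"
proof (rule lam_hom_eqI)
  show "lam_hom (Suc n) n (eta n 0 \<circ> (\<lambda>j. j + 1))"
    by (rule lam_hom_comp[where m = "Suc n"]) (simp_all add: lam_hom_shift lam_hom_eta)
  show "lam_hom (Suc n) n (eta n (Suc n))" by (simp add: lam_hom_eta)
  fix j :: int
  assume "0 \<le> j" "j \<le> int (Suc n)"
  then show "(eta n 0 \<circ> (\<lambda>j. j + 1)) j = eta n (Suc n) j"
    by (cases "j \<le> int n") (simp_all add: eps_eta_eval)
qed

lemma eta_comp_shift:
  assumes "1 \<le> i" "i \<le> Suc n"
  shows "eta n i \<circ> (\<lambda>j. j + 1) = (\<lambda>j. j + 1) \<circ> eta n (i - 1)"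
proof (rule lam_hom_eqI)
  show "lam_hom (Suc n) n (eta n i \<circ> (\<lambda>j. j + 1))"
    by (rule lam_hom_comp[where m = "Suc n"]) (use assms in \<open>simp_all add: lam_hom_shift lam_hom_eta\<close>)
  show "lam_hom (Suc n) n ((\<lambda>j. j + 1) \<circ> eta n (i - 1))"
    by (rule lam_hom_comp[where m = n]) (use assms in \<open>simp_all add: lam_hom_shift lam_hom_eta\<close>)
  fix j :: int
  assume "0 \<le> j" "j \<le> int (Suc n)"
  then show "(eta n i \<circ> (\<lambda>j. j + 1)) j = ((\<lambda>j. j + 1) \<circ> eta n (i - 1)) j"
    using assms by (cases "j \<le> int n") (simp_all add: eps_eta_eval)
qed

lemma eta_comp_eps_0:
  assumes "1 \<le> i" "i \<le> Suc n"
  shows "eta (Suc n) i \<circ> eps (Suc (Suc n)) 0 = eps (Suc n) 0 \<circ> eta n (i - 1)"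
proof (rule lam_hom_eqI)
  show "lam_hom (Suc n) (Suc n) (eta (Suc n) i \<circ> eps (Suc (Suc n)) 0)"
    by (rule lam_hom_comp[where m = "Suc (Suc n)"]) (use assms in \<open>simp_all add: lam_hom_eps lam_hom_eta\<close>)
  show "lam_hom (Suc n) (Suc n) (eps (Suc n) 0 \<circ> eta n (i - 1))"
    by (rule lam_hom_comp[where m = n]) (use assms in \<open>simp_all add: lam_hom_eps lam_hom_eta\<close>)
  fix j :: int
  assume "0 \<le> j" "j \<le> int (Suc n)"
  then show "(eta (Suc n) i \<circ> eps (Suc (Suc n)) 0) j = (eps (Suc n) 0 \<circ> eta n (i - 1)) j"
    using assms by (cases "j \<le> int n") (simp_all add: eps_eta_eval)
qed

lemma eta_comp_eta:
  assumes "a < b" "b \<le> Suc (Suc n)"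
  shows "eta n a \<circ> eta (Suc n) b = eta n (b - 1) \<circ> eta (Suc n) a"
proof (rule lam_hom_eqI)
  show "lam_hom (Suc (Suc n)) n (eta n a \<circ> eta (Suc n) b)"
    by (rule lam_hom_comp[where m = "Suc n"]) (use assms in \<open>simp_all add: lam_hom_eta\<close>)
  show "lam_hom (Suc (Suc n)) n (eta n (b - 1) \<circ> eta (Suc n) a)"
    by (rule lam_hom_comp[where m = "Suc n"]) (use assms in \<open>simp_all add: lam_hom_eta\<close>)
  fix j :: int
  assume "0 \<le> j" "j \<le> int (Suc (Suc n))"
  then show "(eta n a \<circ> eta (Suc n) b) j = (eta n (b - 1) \<circ> eta (Suc n) a) j"
    using assms by (cases "j \<le> int n + 1") (simp_all add: eps_eta_eval)
qed

section \<open>Pre-additive categories\<close>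

locale preadditive_category =
  fixes C :: "('o, 'm, 'x) precat_scheme"
  assumes preadditive: "preadditive C"
begin

text \<open>
  Object hypotheses come last throughout: instantiating the morphism hypotheses with OF
  fixes the objects, and what remains is then discharged by simp.
\<close>

lemma comp_closed:
  "f \<in> Hom C a b \<Longrightarrow> g \<in> Hom C b c \<Longrightarrow> a \<in> Ob C \<Longrightarrow> b \<in> Ob C \<Longrightarrow> c \<in> Ob C
    \<Longrightarrow> Comp C g f \<in> Hom C a c"
  using preadditive unfolding preadditive_def by (elim conjE) meson

lemma comp_assoc:
  "f \<in> Hom C a b \<Longrightarrow> g \<in> Hom C b c \<Longrightarrow> h \<in> Hom C c d
    \<Longrightarrow> a \<in> Ob C \<Longrightarrow> b \<in> Ob C \<Longrightarrow> c \<in> Ob C \<Longrightarrow> d \<in> Ob C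
    \<Longrightarrow> Comp C h (Comp C g f) = Comp C (Comp C h g) f"
  using preadditive unfolding preadditive_def by (elim conjE) meson

lemma Id_in_Hom: "a \<in> Ob C \<Longrightarrow> Id C a \<in> Hom C a a"
  using preadditive unfolding preadditive_def by (elim conjE) meson

lemma comp_Id_left: "f \<in> Hom C a b \<Longrightarrow> a \<in> Ob C \<Longrightarrow> b \<in> Ob C \<Longrightarrow> Comp C (Id C b) f = f"
  using preadditive unfolding preadditive_def by (elim conjE) meson

lemma comp_Id_right: "f \<in> Hom C a b \<Longrightarrow> a \<in> Ob C \<Longrightarrow> b \<in> Ob C \<Longrightarrow> Comp C f (Id C a) = f"
  using preadditive unfolding preadditive_def by (elim conjE) meson

lemma comp_add_left:
  "f \<in> Hom C a b \<Longrightarrow> g \<in> Hom C b c \<Longrightarrow> g' \<in> Hom C b c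
    \<Longrightarrow> a \<in> Ob C \<Longrightarrow> b \<in> Ob C \<Longrightarrow> c \<in> Ob C
    \<Longrightarrow> Comp C (Add C g g') f = Add C (Comp C g f) (Comp C g' f)"
  using preadditive unfolding preadditive_def by (elim conjE) meson

lemma comp_add_right:
  "f \<in> Hom C a b \<Longrightarrow> f' \<in> Hom C a b \<Longrightarrow> g \<in> Hom C b c
    \<Longrightarrow> a \<in> Ob C \<Longrightarrow> b \<in> Ob C \<Longrightarrow> c \<in> Ob C
    \<Longrightarrow> Comp C g (Add C f f') = Add C (Comp C g f) (Comp C g f')"
  using preadditive unfolding preadditive_def by (elim conjE) meson

lemma Zero_in_Hom: "a \<in> Ob C \<Longrightarrow> b \<in> Ob C \<Longrightarrow> Zero C a b \<in> Hom C a b"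
  using preadditive unfolding preadditive_def by (elim conjE) meson

lemma add_in_Hom:
  "f \<in> Hom C a b \<Longrightarrow> g \<in> Hom C a b \<Longrightarrow> a \<in> Ob C \<Longrightarrow> b \<in> Ob C \<Longrightarrow> Add C f g \<in> Hom C a b"
  using preadditive unfolding preadditive_def by (elim conjE) meson

lemma neg_in_Hom: "f \<in> Hom C a b \<Longrightarrow> a \<in> Ob C \<Longrightarrow> b \<in> Ob C \<Longrightarrow> Neg C f \<in> Hom C a b"
  using preadditive unfolding preadditive_def by (elim conjE) meson

lemma add_assoc:
  "f \<in> Hom C a b \<Longrightarrow> g \<in> Hom C a b \<Longrightarrow> h \<in> Hom C a b \<Longrightarrow> a \<in> Ob C \<Longrightarrow> b \<in> Ob C
    \<Longrightarrow> Add C (Add C f g) h = Add C f (Add C g h)"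
  using preadditive unfolding preadditive_def by (elim conjE) meson

lemma add_commute:
  "f \<in> Hom C a b \<Longrightarrow> g \<in> Hom C a b \<Longrightarrow> a \<in> Ob C \<Longrightarrow> b \<in> Ob C \<Longrightarrow> Add C f g = Add C g f"
  using preadditive unfolding preadditive_def by (elim conjE) meson

lemma add_Zero_right: "f \<in> Hom C a b \<Longrightarrow> a \<in> Ob C \<Longrightarrow> b \<in> Ob C \<Longrightarrow> Add C f (Zero C a b) = f"
  using preadditive unfolding preadditive_def by (elim conjE) meson

lemma add_neg_right: "f \<in> Hom C a b \<Longrightarrow> a \<in> Ob C \<Longrightarrow> b \<in> Ob C \<Longrightarrow> Add C f (Neg C f) = Zero C a b"
  using preadditive unfolding preadditive_def by (elim conjE) meson

lemma add_neg_left: "f \<in> Hom C a b \<Longrightarrow> a \<in> Ob C \<Longrightarrow> b \<in> Ob C \<Longrightarrow> Add C (Neg C f) f = Zero C a b"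
  by (metis add_commute add_neg_right neg_in_Hom)

lemma add_Zero_left: "f \<in> Hom C a b \<Longrightarrow> a \<in> Ob C \<Longrightarrow> b \<in> Ob C \<Longrightarrow> Add C (Zero C a b) f = f"
  by (metis add_commute add_Zero_right Zero_in_Hom)

lemma add_left_cancel:
  assumes f: "f \<in> Hom C a b" and g: "g \<in> Hom C a b" and h: "h \<in> Hom C a b"
    and a: "a \<in> Ob C" and b: "b \<in> Ob C" and eq: "Add C f g = Add C f h"
  shows "g = h"
proof -
  have nf: "Neg C f \<in> Hom C a b"
    using f a b by (rule neg_in_Hom)
  have "g = Add C (Add C (Neg C f) f) g"
    using f g a b by (simp add: add_neg_left add_Zero_left)
  also have "\<dots> = Add C (Neg C f) (Add C f h)"
    using add_assoc[OF nf f g a b] eq by simp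
  also have "\<dots> = Add C (Add C (Neg C f) f) h"
    using add_assoc[OF nf f h a b] by simp
  also have "\<dots> = h"
    using f h a b by (simp add: add_neg_left add_Zero_left)
  finally show ?thesis .
qed

lemma neg_unique:
  assumes "f \<in> Hom C a b" "g \<in> Hom C a b" "a \<in> Ob C" "b \<in> Ob C" and "Add C f g = Zero C a b"
  shows "Neg C f = g"
  by (rule add_left_cancel[of f a b]) (use assms in \<open>simp_all add: neg_in_Hom add_neg_right\<close>)

lemma neg_neg: "f \<in> Hom C a b \<Longrightarrow> a \<in> Ob C \<Longrightarrow> b \<in> Ob C \<Longrightarrow> Neg C (Neg C f) = f"
  by (rule neg_unique) (simp_all add: neg_in_Hom add_neg_left)

lemma neg_Zero: "a \<in> Ob C \<Longrightarrow> b \<in> Ob C \<Longrightarrow> Neg C (Zero C a b) = Zero C a b"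
  by (rule neg_unique) (simp_all add: Zero_in_Hom add_Zero_right)

lemma comp_Zero_right:
  assumes g: "g \<in> Hom C b c" and obs: "a \<in> Ob C" "b \<in> Ob C" "c \<in> Ob C"
  shows "Comp C g (Zero C a b) = Zero C a c"
proof -
  have z: "Zero C a b \<in> Hom C a b"
    using obs by (simp add: Zero_in_Hom)
  have gz: "Comp C g (Zero C a b) \<in> Hom C a c"
    using comp_closed[OF z g] obs by simp
  have "Add C (Comp C g (Zero C a b)) (Comp C g (Zero C a b))
      = Add C (Comp C g (Zero C a b)) (Zero C a c)"
    using comp_add_right[OF z z g] obs by (simp add: add_Zero_right z gz)
  then show ?thesis
    using add_left_cancel[OF gz gz] obs by (simp add: Zero_in_Hom)
qed

lemma comp_Zero_left:
  assumes f: "f \<in> Hom C a b" and obs: "a \<in> Ob C" "b \<in> Ob C" "c \<in> Ob C"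
  shows "Comp C (Zero C b c) f = Zero C a c"
proof -
  have z: "Zero C b c \<in> Hom C b c"
    using obs by (simp add: Zero_in_Hom)
  have zf: "Comp C (Zero C b c) f \<in> Hom C a c"
    using comp_closed[OF f z] obs by simp
  have "Add C (Comp C (Zero C b c) f) (Comp C (Zero C b c) f)
      = Add C (Comp C (Zero C b c) f) (Zero C a c)"
    using comp_add_left[OF f z z] obs by (simp add: add_Zero_right z zf)
  then show ?thesis
    using add_left_cancel[OF zf zf] obs by (simp add: Zero_in_Hom)
qed

lemma comp_neg_left:
  assumes f: "f \<in> Hom C a b" and g: "g \<in> Hom C b c" and obs: "a \<in> Ob C" "b \<in> Ob C" "c \<in> Ob C"
  shows "Comp C (Neg C g) f = Neg C (Comp C g f)"
proof (rule sym, rule neg_unique)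
  have ng: "Neg C g \<in> Hom C b c"
    using g obs by (simp add: neg_in_Hom)
  show "Add C (Comp C g f) (Comp C (Neg C g) f) = Zero C a c"
    using comp_add_left[OF f g ng] obs by (simp add: add_neg_right[OF g] comp_Zero_left[OF f])
  show "Comp C (Neg C g) f \<in> Hom C a c"
    using comp_closed[OF f ng] obs by simp
qed (use comp_closed[OF f g] obs in simp_all)

lemma comp_neg_right:
  assumes f: "f \<in> Hom C a b" and g: "g \<in> Hom C b c" and obs: "a \<in> Ob C" "b \<in> Ob C" "c \<in> Ob C"
  shows "Comp C g (Neg C f) = Neg C (Comp C g f)"
proof (rule sym, rule neg_unique)
  have nf: "Neg C f \<in> Hom C a b"
    using f obs by (simp add: neg_in_Hom)
  show "Add C (Comp C g f) (Comp C g (Neg C f)) = Zero C a c"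
    using comp_add_right[OF f nf g] obs by (simp add: add_neg_right[OF f] comp_Zero_right[OF g])
  show "Comp C g (Neg C f) \<in> Hom C a c"
    using comp_closed[OF nf g] obs by simp
qed (use comp_closed[OF f g] obs in simp_all)

lemma comp_diff_left:
  assumes "f \<in> Hom C a b" "g \<in> Hom C b c" "g' \<in> Hom C b c" "a \<in> Ob C" "b \<in> Ob C" "c \<in> Ob C"
  shows "Comp C (Add C g (Neg C g')) f = Add C (Comp C g f) (Neg C (Comp C g' f))"
  using assms by (simp add: comp_add_left neg_in_Hom comp_neg_left)

lemma comp_diff_right:
  assumes "f \<in> Hom C a b" "f' \<in> Hom C a b" "g \<in> Hom C b c" "a \<in> Ob C" "b \<in> Ob C" "c \<in> Ob C"
  shows "Comp C g (Add C f (Neg C f')) = Add C (Comp C g f) (Neg C (Comp C g f'))"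
  using assms by (simp add: comp_add_right neg_in_Hom comp_neg_right)

lemma sgnmor_in_Hom: "f \<in> Hom C a b \<Longrightarrow> a \<in> Ob C \<Longrightarrow> b \<in> Ob C \<Longrightarrow> sgnmor C k f \<in> Hom C a b"
  by (simp add: sgnmor_def neg_in_Hom)

lemma sgnmor_Zero: "a \<in> Ob C \<Longrightarrow> b \<in> Ob C \<Longrightarrow> sgnmor C k (Zero C a b) = Zero C a b"
  by (simp add: sgnmor_def neg_Zero)

lemma sgnmor_Suc:
  "f \<in> Hom C a b \<Longrightarrow> a \<in> Ob C \<Longrightarrow> b \<in> Ob C \<Longrightarrow> sgnmor C (Suc k) f = Neg C (sgnmor C k f)"
  by (simp add: sgnmor_def neg_neg)

lemma sgnmor_Neg: "sgnmor C k (Neg C f) = Neg C (sgnmor C k f)"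
  by (simp add: sgnmor_def)

lemma sgnmor_comp_left:
  "f \<in> Hom C a b \<Longrightarrow> g \<in> Hom C b c \<Longrightarrow> a \<in> Ob C \<Longrightarrow> b \<in> Ob C \<Longrightarrow> c \<in> Ob C
    \<Longrightarrow> Comp C (sgnmor C k g) f = sgnmor C k (Comp C g f)"
  by (simp add: sgnmor_def comp_neg_left)

lemma sgnmor_comp_right:
  "f \<in> Hom C a b \<Longrightarrow> g \<in> Hom C b c \<Longrightarrow> a \<in> Ob C \<Longrightarrow> b \<in> Ob C \<Longrightarrow> c \<in> Ob C
    \<Longrightarrow> Comp C g (sgnmor C k f) = sgnmor C k (Comp C g f)"
  by (simp add: sgnmor_def comp_neg_right)

end

section \<open>Duplicial modules\<close>

locale duplicial_module = preadditive_category C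
  for C :: "('o, 'm, 'x) precat_scheme" +
  fixes Mo :: "nat \<Rightarrow> 'o" and Mf :: "nat \<Rightarrow> nat \<Rightarrow> (int \<Rightarrow> int) \<Rightarrow> 'm"
  assumes duplicial: "duplicial C Mo Mf"
begin

lemma Mo_in_Ob [simp]: "Mo n \<in> Ob C"
  using duplicial by (simp add: duplicial_def)

lemma Mf_in_Hom: "lam_hom m n f \<Longrightarrow> Mf m n f \<in> Hom C (Mo n) (Mo m)"
  using duplicial by (simp add: duplicial_def)

lemma Mf_id: "Mf m m id = Id C (Mo m)"
  using duplicial by (simp add: duplicial_def)

lemma Mf_comp:
  "lam_hom l m f \<Longrightarrow> lam_hom m n g \<Longrightarrow> Comp C (Mf l m f) (Mf m n g) = Mf l n (g \<circ> f)"
  using duplicial by (simp add: duplicial_def)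

definition cyclic_op :: "nat \<Rightarrow> 'm" where
  "cyclic_op n = Mf n n (\<lambda>j. j + 1)"

lemma cyclic_op_in_Hom: "cyclic_op n \<in> Hom C (Mo n) (Mo n)"
  by (simp add: cyclic_op_def Mf_in_Hom lam_hom_shift)

lemma sdeg_in_Hom: "i \<le> Suc n \<Longrightarrow> sdeg Mf n i \<in> Hom C (Mo n) (Mo (Suc n))"
  by (simp add: sdeg_def Mf_in_Hom lam_hom_eta)

lemma dface_in_Hom: "i \<le> Suc n \<Longrightarrow> dface Mf (Suc n) i \<in> Hom C (Mo (Suc n)) (Mo n)"
  by (simp add: dface_def Mf_in_Hom lam_hom_eps)

lemma dface_0_comp_sdeg_0: "Comp C (dface Mf (Suc n) 0) (sdeg Mf n 0) = Id C (Mo n)"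
  using Mf_comp[OF lam_hom_eps[of 0 n] lam_hom_eta[of 0 n]]
  by (simp add: dface_def sdeg_def eta_0_comp_eps_0 Mf_id)

lemma dface_0_comp_sdeg_last: "Comp C (dface Mf (Suc n) 0) (sdeg Mf n (Suc n)) = cyclic_op n"
  using Mf_comp[OF lam_hom_eps[of 0 n] lam_hom_eta[of "Suc n" n]]
  by (simp add: dface_def sdeg_def eta_last_comp_eps_0 cyclic_op_def)

lemma cyclic_op_comp_sdeg_0: "Comp C (cyclic_op (Suc n)) (sdeg Mf n 0) = sdeg Mf n (Suc n)"
  using Mf_comp[OF lam_hom_shift lam_hom_eta[of 0 n]]
  by (simp add: sdeg_def cyclic_op_def eta_0_comp_shift)

lemma cyclic_op_comp_sdeg:
  assumes "1 \<le> i" "i \<le> Suc n"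
  shows "Comp C (cyclic_op (Suc n)) (sdeg Mf n i) = Comp C (sdeg Mf n (i - 1)) (cyclic_op n)"
  using assms Mf_comp[OF lam_hom_shift lam_hom_eta[of i n]]
    Mf_comp[OF lam_hom_eta[of "i - 1" n] lam_hom_shift]
  by (simp add: sdeg_def cyclic_op_def eta_comp_shift)

lemma dface_0_comp_sdeg:
  assumes "1 \<le> i" "i \<le> Suc n"
  shows "Comp C (dface Mf (Suc (Suc n)) 0) (sdeg Mf (Suc n) i)
    = Comp C (sdeg Mf n (i - 1)) (dface Mf (Suc n) 0)"
  using assms Mf_comp[OF lam_hom_eps[of 0 "Suc n"] lam_hom_eta[of i "Suc n"]]
    Mf_comp[OF lam_hom_eta[of "i - 1" n] lam_hom_eps[of 0 n]]
  by (simp add: dface_def sdeg_def eta_comp_eps_0)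

lemma sdeg_comp_sdeg:
  assumes "a < b" "b \<le> Suc (Suc n)"
  shows "Comp C (sdeg Mf (Suc n) b) (sdeg Mf n a) = Comp C (sdeg Mf (Suc n) a) (sdeg Mf n (b - 1))"
  using assms Mf_comp[OF lam_hom_eta[of b "Suc n"] lam_hom_eta[of a n]]
    Mf_comp[OF lam_hom_eta[of a "Suc n"] lam_hom_eta[of "b - 1" n]]
  by (simp add: sdeg_def eta_comp_eta)

lemma karoubi_0: "karoubi C Mf 0 = cyclic_op 0"
  using dface_0_comp_sdeg_last[of 0] by (simp add: karoubi_def)

lemma karoubi_Suc:
  "karoubi C Mf (Suc n) = sgnmor C (Suc n)
     (Add C (cyclic_op (Suc n)) (Neg C (Comp C (sdeg Mf n (Suc n)) (dface Mf (Suc n) 0))))"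
  using dface_0_comp_sdeg_last[of "Suc n"] by (simp add: karoubi_def sgnmor_def Let_def)

lemma karoubi_in_Hom: "karoubi C Mf n \<in> Hom C (Mo n) (Mo n)"
proof (cases n)
  case 0
  then show ?thesis by (simp add: karoubi_0 cyclic_op_in_Hom)
next
  case (Suc m)
  have "Comp C (sdeg Mf m (Suc m)) (dface Mf (Suc m) 0) \<in> Hom C (Mo (Suc m)) (Mo (Suc m))"
    by (rule comp_closed[OF dface_in_Hom sdeg_in_Hom]) simp_all
  then show ?thesis
    using Suc by (simp add: karoubi_Suc sgnmor_in_Hom add_in_Hom neg_in_Hom cyclic_op_in_Hom)
qed

lemma karoubi_Suc_comp_sdeg_0:
  "Comp C (karoubi C Mf (Suc n)) (sdeg Mf n 0) = Zero C (Mo n) (Mo (Suc n))"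
proof -
  let ?t = "cyclic_op (Suc n)" and ?s = "sdeg Mf n (Suc n)" and ?d = "dface Mf (Suc n) 0"
    and ?s\<^sub>0 = "sdeg Mf n 0"
  have t: "?t \<in> Hom C (Mo (Suc n)) (Mo (Suc n))" and s: "?s \<in> Hom C (Mo n) (Mo (Suc n))"
    and d: "?d \<in> Hom C (Mo (Suc n)) (Mo n)" and s\<^sub>0: "?s\<^sub>0 \<in> Hom C (Mo n) (Mo (Suc n))"
    by (simp_all add: cyclic_op_in_Hom sdeg_in_Hom dface_in_Hom)
  have sd: "Comp C ?s ?d \<in> Hom C (Mo (Suc n)) (Mo (Suc n))"
    using comp_closed[OF d s] by simp
  have "Comp C (Add C ?t (Neg C (Comp C ?s ?d))) ?s\<^sub>0
      = Add C (Comp C ?t ?s\<^sub>0) (Neg C (Comp C (Comp C ?s ?d) ?s\<^sub>0))"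
    using comp_diff_left[OF s\<^sub>0 t sd] by simp
  also have "\<dots> = Add C ?s (Neg C ?s)"
    using comp_assoc[OF s\<^sub>0 d s] comp_Id_right[OF s]
    by (simp add: cyclic_op_comp_sdeg_0 dface_0_comp_sdeg_0)
  also have "\<dots> = Zero C (Mo n) (Mo (Suc n))"
    using add_neg_right[OF s] by simp
  finally show ?thesis
    using sgnmor_comp_left[OF s\<^sub>0 add_in_Hom[OF t neg_in_Hom[OF sd]]]
    by (simp add: karoubi_Suc sgnmor_Zero)
qed

lemma karoubi_Suc_comp_sdeg:
  assumes "1 \<le> i" "i \<le> n"
  shows "Comp C (karoubi C Mf (Suc n)) (sdeg Mf n i)
    = Neg C (Comp C (sdeg Mf n (i - 1)) (karoubi C Mf n))"
proof -
  obtain m where n: "n = Suc m"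
    using assms by (cases n) auto
  let ?t = "cyclic_op (Suc n)" and ?s = "sdeg Mf n (Suc n)" and ?d = "dface Mf (Suc n) 0"
    and ?t' = "cyclic_op n" and ?s' = "sdeg Mf m n" and ?d' = "dface Mf n 0"
    and ?s\<^sub>i = "sdeg Mf n i" and ?s\<^sub>i\<^sub>1 = "sdeg Mf n (i - 1)" and ?r = "sdeg Mf m (i - 1)"
  have t: "?t \<in> Hom C (Mo (Suc n)) (Mo (Suc n))" and t': "?t' \<in> Hom C (Mo n) (Mo n)"
    and s: "?s \<in> Hom C (Mo n) (Mo (Suc n))" and d: "?d \<in> Hom C (Mo (Suc n)) (Mo n)"
    and s': "?s' \<in> Hom C (Mo m) (Mo n)" and d': "?d' \<in> Hom C (Mo n) (Mo m)"
    and s\<^sub>i: "?s\<^sub>i \<in> Hom C (Mo n) (Mo (Suc n))" and s\<^sub>i\<^sub>1: "?s\<^sub>i\<^sub>1 \<in> Hom C (Mo n) (Mo (Suc n))"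
    and r: "?r \<in> Hom C (Mo m) (Mo n)"
    using assms n by (simp_all add: cyclic_op_in_Hom sdeg_in_Hom dface_in_Hom)
  have sd: "Comp C ?s ?d \<in> Hom C (Mo (Suc n)) (Mo (Suc n))"
    using comp_closed[OF d s] by simp
  have s'd': "Comp C ?s' ?d' \<in> Hom C (Mo n) (Mo n)"
    using comp_closed[OF d' s'] by simp
  have "Comp C (Add C ?t (Neg C (Comp C ?s ?d))) ?s\<^sub>i
      = Add C (Comp C ?t ?s\<^sub>i) (Neg C (Comp C ?s (Comp C ?d ?s\<^sub>i)))"
    using comp_diff_left[OF s\<^sub>i t sd] comp_assoc[OF s\<^sub>i d s] by simp
  also have "Comp C ?t ?s\<^sub>i = Comp C ?s\<^sub>i\<^sub>1 ?t'"
    using assms by (simp add: cyclic_op_comp_sdeg)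
  also have "Comp C ?s (Comp C ?d ?s\<^sub>i) = Comp C ?s\<^sub>i\<^sub>1 (Comp C ?s' ?d')"
  proof -
    have "Comp C ?d ?s\<^sub>i = Comp C ?r ?d'"
      using assms n by (simp add: dface_0_comp_sdeg)
    moreover have "Comp C ?s ?r = Comp C ?s\<^sub>i\<^sub>1 ?s'"
      using assms n sdeg_comp_sdeg[of "i - 1" "Suc (Suc m)" m] by simp
    ultimately show ?thesis
      using comp_assoc[OF d' r s] comp_assoc[OF d' s' s\<^sub>i\<^sub>1] by simp
  qed
  also have "Add C (Comp C ?s\<^sub>i\<^sub>1 ?t') (Neg C (Comp C ?s\<^sub>i\<^sub>1 (Comp C ?s' ?d')))
      = Comp C ?s\<^sub>i\<^sub>1 (Add C ?t' (Neg C (Comp C ?s' ?d')))"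
    using comp_diff_right[OF t' s'd' s\<^sub>i\<^sub>1] by simp
  finally have "Comp C (Add C ?t (Neg C (Comp C ?s ?d))) ?s\<^sub>i
      = Comp C ?s\<^sub>i\<^sub>1 (Add C ?t' (Neg C (Comp C ?s' ?d')))" .
  moreover have "karoubi C Mf n = sgnmor C n (Add C ?t' (Neg C (Comp C ?s' ?d')))"
    using n karoubi_Suc[of m] by simp
  ultimately show ?thesis
    using sgnmor_comp_left[OF s\<^sub>i add_in_Hom[OF t neg_in_Hom[OF sd]]]
      sgnmor_comp_right[OF add_in_Hom[OF t' neg_in_Hom[OF s'd']] s\<^sub>i\<^sub>1]
      sgnmor_Suc comp_closed[OF add_in_Hom[OF t' neg_in_Hom[OF s'd']] s\<^sub>i\<^sub>1]
    by (simp add: karoubi_Suc)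
qed

lemma sseq_in_Hom:
  assumes "\<And>j. 1 \<le> j \<Longrightarrow> j \<le> k \<Longrightarrow> i j + j \<le> Suc n" and "k \<le> n"
  shows "sseq C Mo Mf i n k \<in> Hom C (Mo (n - k)) (Mo n)"
  using assms
proof (induction k)
  case 0
  then show ?case
    by (simp add: Id_in_Hom)
next
  case (Suc k)
  have "sdeg Mf (n - Suc k) (i (Suc k)) \<in> Hom C (Mo (n - Suc k)) (Mo (n - k))"
    using sdeg_in_Hom[of "i (Suc k)" "n - Suc k"] Suc.prems Suc_diff_Suc[of k n] by fastforce
  then show ?case
    using comp_closed Suc by simp
qed

lemma karoubi_comp_sseq:
  assumes "\<And>j. 1 \<le> j \<Longrightarrow> j \<le> k \<Longrightarrow> 1 \<le> i j \<and> i j + j \<le> n"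
  shows "Comp C (karoubi C Mf n) (sseq C Mo Mf i n k)
    = sgnmor C k (Comp C (sseq C Mo Mf (\<lambda>j. i j - 1) n k) (karoubi C Mf (n - k)))"
  using assms
proof (induction k)
  case 0
  show ?case
    using karoubi_in_Hom[of n] by (simp add: comp_Id_left comp_Id_right sgnmor_def)
next
  case (Suc k)
  define p where "p = n - Suc k"
  have i: "1 \<le> i (Suc k)" "i (Suc k) \<le> p" and np: "n - k = Suc p"
    using Suc.prems[of "Suc k"] by (auto simp: p_def)
  have S: "sseq C Mo Mf i n k \<in> Hom C (Mo (Suc p)) (Mo n)"
    and S': "sseq C Mo Mf (\<lambda>j. i j - 1) n k \<in> Hom C (Mo (Suc p)) (Mo n)"
    using sseq_in_Hom[of k i n] sseq_in_Hom[of k "\<lambda>j. i j - 1" n] Suc.prems np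
    by (force simp: le_SucI)+
  have s: "sdeg Mf p (i (Suc k)) \<in> Hom C (Mo p) (Mo (Suc p))"
    and s': "sdeg Mf p (i (Suc k) - 1) \<in> Hom C (Mo p) (Mo (Suc p))"
    using i by (simp_all add: sdeg_in_Hom)
  have K: "karoubi C Mf n \<in> Hom C (Mo n) (Mo n)" and K': "karoubi C Mf p \<in> Hom C (Mo p) (Mo p)"
    and K'': "karoubi C Mf (Suc p) \<in> Hom C (Mo (Suc p)) (Mo (Suc p))"
    by (simp_all add: karoubi_in_Hom)
  have "Comp C (karoubi C Mf n) (sseq C Mo Mf i n (Suc k))
      = Comp C (Comp C (karoubi C Mf n) (sseq C Mo Mf i n k)) (sdeg Mf p (i (Suc k)))"
    using comp_assoc[OF s S K] by (simp add: p_def)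
  also have "\<dots> = sgnmor C k (Comp C (sseq C Mo Mf (\<lambda>j. i j - 1) n k)
      (Comp C (karoubi C Mf (Suc p)) (sdeg Mf p (i (Suc k)))))"
    using Suc comp_assoc[OF s K'' S'] sgnmor_comp_left[OF s comp_closed[OF K'' S']] np by simp
  also have "\<dots> = sgnmor C (Suc k) (Comp C (sseq C Mo Mf (\<lambda>j. i j - 1) n (Suc k)) (karoubi C Mf p))"
    using karoubi_Suc_comp_sdeg[OF i] comp_neg_right[OF comp_closed[OF K' s'] S']
      comp_assoc[OF K' s' S'] sgnmor_Suc comp_closed[OF comp_closed[OF K' s'] S']
    by (simp add: p_def sgnmor_Neg)
  finally show ?case
    by (simp add: p_def)
qed

lemma karoubi_comp_sseq_last_0:
  assumes "\<And>j. 1 \<le> j \<Longrightarrow> j < k \<Longrightarrow> 1 \<le> i j \<and> i j + j \<le> n"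
    and "1 \<le> k" "k \<le> n" "i k = 0"
  shows "Comp C (karoubi C Mf n) (sseq C Mo Mf i n k) = Zero C (Mo (n - k)) (Mo n)"
proof -
  obtain l where k: "k = Suc l"
    using assms(2) by (cases k) auto
  define p where "p = n - k"
  have np: "n - l = Suc p"
    using assms(3) k by (simp add: p_def)
  have S: "sseq C Mo Mf i n l \<in> Hom C (Mo (Suc p)) (Mo n)"
    and S': "sseq C Mo Mf (\<lambda>j. i j - 1) n l \<in> Hom C (Mo (Suc p)) (Mo n)"
    using sseq_in_Hom[of l i n] sseq_in_Hom[of l "\<lambda>j. i j - 1" n] assms(1,3) k np
    by (force simp: le_SucI)+
  have s: "sdeg Mf p 0 \<in> Hom C (Mo p) (Mo (Suc p))"
    by (simp add: sdeg_in_Hom)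
  have K: "karoubi C Mf n \<in> Hom C (Mo n) (Mo n)"
    and K': "karoubi C Mf (Suc p) \<in> Hom C (Mo (Suc p)) (Mo (Suc p))"
    by (simp_all add: karoubi_in_Hom)
  have "Comp C (karoubi C Mf n) (sseq C Mo Mf i n k)
      = Comp C (Comp C (karoubi C Mf n) (sseq C Mo Mf i n l)) (sdeg Mf p 0)"
    using comp_assoc[OF s S K] assms(4) k by (simp add: p_def)
  also have "\<dots> = sgnmor C l (Comp C (sseq C Mo Mf (\<lambda>j. i j - 1) n l)
      (Comp C (karoubi C Mf (Suc p)) (sdeg Mf p 0)))"
    using karoubi_comp_sseq[of l i n] assms(1) k comp_assoc[OF s K' S']
      sgnmor_comp_left[OF s comp_closed[OF K' S']] np
    by simp
  also have "\<dots> = Zero C (Mo p) (Mo n)"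
    using comp_Zero_right[OF S'] by (simp add: karoubi_Suc_comp_sdeg_0 sgnmor_Zero)
  finally show ?thesis
    by (simp add: p_def)
qed

end

lemma decreasing_gap:
  fixes i :: "nat \<Rightarrow> nat"
  assumes "\<And>j. 1 \<le> j \<Longrightarrow> j < k \<Longrightarrow> i (Suc j) < i j"
    and "1 \<le> j" "j \<le> j'" "j' \<le> k"
  shows "i j' + (j' - j) \<le> i j"
  using assms(3,4)
proof (induction j' rule: dec_induct)
  case (step j')
  then show ?case
    using assms(1)[of j'] assms(2) by simp
qed simp

theorem mainTheorem12:
  fixes C :: "('o, 'm, 'x) precat_scheme"
    and Mo :: "nat \<Rightarrow> 'o"
    and Mf :: "nat \<Rightarrow> nat \<Rightarrow> (int \<Rightarrow> int) \<Rightarrow> 'm"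
    and i :: "nat \<Rightarrow> nat"
    and n k :: nat
  assumes "preadditive C"
    and "duplicial C Mo Mf"
    and "1 \<le> n" and "1 \<le> k" and "k \<le> n"
    and "\<forall>j. 1 \<le> j \<and> j < k \<longrightarrow> i (Suc j) < i j"
    and "i 1 < n"
  shows "Comp C (karoubi C Mf n) (sseq C Mo Mf i n k) =
           (if i k = 0 then Zero C (Mo (n - k)) (Mo n)
            else sgnmor C k (Comp C (sseq C Mo Mf (\<lambda>j. i j - 1) n k) (karoubi C Mf (n - k))))"
proof -
  interpret duplicial_module C Mo Mf
    using assms(1,2) by unfold_locales
  have gap: "i j' + (j' - j) \<le> i j" if "1 \<le> j" "j \<le> j'" "j' \<le> k" for j j'
    using decreasing_gap[of k i j j'] assms(6) that by blast
  have bound: "i j + j \<le> n" if "1 \<le> j" "j \<le> k" for j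
    using gap[of 1 j] that assms(7) by simp
  show ?thesis
  proof (cases "i k = 0")
    case True
    have "1 \<le> i j" if "1 \<le> j" "j < k" for j
      using gap[of j k] that True by simp
    then show ?thesis
      using karoubi_comp_sseq_last_0[of k i n] bound True assms(4,5) by simp
  next
    case False
    have "1 \<le> i j" if "1 \<le> j" "j \<le> k" for j
      using gap[of j k] that False by simp
    then show ?thesis
      using karoubi_comp_sseq[of k i n] bound False by simp
  qed
qed

end
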